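(* Let $\varepsilon>0$, $C>0$, and integers $1\le\hat d\le d$. Define the projected random sign (PRS) mechanism on input $\mathbf g\in\mathbb{R}^d$ as follows: draw a random matrix $\mathbf M=(m_{i,j})\in\mathbb{R}^{\hat d\times d}$ independently of everything else with i.i.d. entries equal to $-\sqrt3$ with probability $1/6$, $0$ with probability $2/3$, $+\sqrt3$ with probability $1/6$; set $\mathbf u=\mathbf M\mathbf g$; for each $i\in\{1,\dots,\hat d\}$ let $\bar u_i=\min\{C,\max\{-C,u_i\}\}$ and, independently across $i$, let $\tilde u_i=+C$ with probability $\frac{1}{e^{\varepsilon/\hat d}+1}+\frac{\bar u_i+C}{2C}\cdot\frac{e^{\varepsilon/\hat d}-1}{e^{\varepsilon/\hat d}+1}$ and $\tilde u_i=-C$ otherwise; output $\mathbf M^{\top}\tilde{\mathbf u}\in\mathbb{R}^d$. Consider $N$ agents with private parameters $\psi_1,\dots,\psi_N\in\Psi$ reporting in order $n=1,\dots,N$, where agent $n$ computes a gradient $\mathbf g_n\in\mathbb{R}^d$ whose conditional law given $\psi_1,\dots,\psi_N$ and previous reports $\tilde{\mathbf g}_1,\dots,\tilde{\mathbf g}_{n-1}$ depends only on $\psi_n$ and $\tilde{\mathbf g}_1,\dots,\tilde{\mathbf g}_{n-1}$, and reports $\tilde{\mathbf g}_n$ equal to the output of the PRS mechanism applied to $\mathbf g_n$ with fresh randomness. Then gradient submission with the PRS mechanism satisfies $\varepsilon$-LDP: for every $n$, all $\psi,\psi'\in\Psi$, every value of $(\tilde{\mathbf g}_1,\dots,\tilde{\mathbf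 g}_{n-1})$ and every measurable $G\subseteq\mathbb{R}^d$, $$\Pr(\tilde{\mathbf g}_n\in G\mid\psi_n=\psi,\tilde{\mathbf g}_1,\dots,\tilde{\mathbf g}_{n-1})\le e^{\varepsilon}\Pr(\tilde{\mathbf g}_n\in G\mid\psi_n=\psi',\tilde{\mathbf g}_1,\dots,\tilde{\mathbf g}_{n-1}).$$
   Context: $\Psi$ is an arbitrary set of environment parameters. *)

theory Defs
  imports "HOL-Analysis.Analysis" "HOL-Probability.Probability"
begin

definition entry_pmf :: "real pmf" where
  "entry_pmf = map_pmf (\<lambda>k::nat. if k = 0 then - sqrt 3 else if k = 1 then sqrt 3 else 0)
                 (pmf_of_set {0..<6})"

text \<open>Random matrix M in R^(dhat x d) with i.i.d. entries; rows indexed by 'k (CARD('k) = dhat),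
  columns by 'd (CARD('d) = d).\<close>
definition rand_matrix :: "(real^'d^'k) pmf" where
  "rand_matrix = map_pmf (\<lambda>f. \<chi> i j. f (i, j)) (Pi_pmf UNIV 0 (\<lambda>_. entry_pmf))"

definition clip :: "real \<Rightarrow> real \<Rightarrow> real" where
  "clip C u = min C (max (- C) u)"

definition plus_prob :: "real \<Rightarrow> nat \<Rightarrow> real \<Rightarrow> real \<Rightarrow> real" where
  "plus_prob eps dhat C u =
     1 / (exp (eps / real dhat) + 1)
     + (clip C u + C) / (2 * C) * ((exp (eps / real dhat) - 1) / (exp (eps / real dhat) + 1))"

definition PRS :: "'k::finite itself \<Rightarrow> real \<Rightarrow> real \<Rightarrow> real^'d \<Rightarrow> (real^'d) pmf" where
  "PRS _ eps C g =
     do { M \<leftarrow> (rand_matrix :: (real^'d^'k) pmf);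
          b \<leftarrow> Pi_pmf (UNIV :: 'k set) False
                 (\<lambda>i. bernoulli_pmf (plus_prob eps CARD('k) C ((M *v g) $ i)));
          return_pmf (transpose M *v (\<chi> i. if b i then C else - C)) }"

definition report_law :: "real \<Rightarrow> real \<Rightarrow> 'k::finite itself \<Rightarrow> (real^'d) measure \<Rightarrow> (real^'d) measure" where
  "report_law eps C k mu = mu \<bind> (\<lambda>g. measure_pmf (PRS k eps C g))"

end

theory Submission
  imports Defs
begin

text \<open>Given the matrix M, the output of PRS is a fixed function of the sign vector, whose
  coordinates are independent Bernoulli variables with success probabilities in
  [1/(E+1), E/(E+1)], where E = exp(eps/dhat). Changing the gradient therefore changes the
  likelihood of each coordinate by a factor at most E, and that of the whole sign vector by at
  most E^dhat = exp eps. Such a ratio bound, valid for every pair of inputs, survives averaging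
  over M, post-processing, and mixing over two arbitrary gradient laws.\<close>

context
begin

interpretation pmf_as_function .

lemma pmf_bernoulli_pmf:
  "pmf (bernoulli_pmf p) b = (if b then min 1 (max 0 p) else 1 - min 1 (max 0 p))"
  by transfer simp

end

lemma pmf_bernoulli_le_cmult:
  fixes E p p' :: real
  assumes "0 \<le> E" "p \<in> {1 / (E + 1) .. E / (E + 1)}" "p' \<in> {1 / (E + 1) .. E / (E + 1)}"
  shows "pmf (bernoulli_pmf p) b \<le> E * pmf (bernoulli_pmf p') b"
proof -
  have lo: "1 / (E + 1) \<le> p" "1 / (E + 1) \<le> p'" and hi: "p \<le> E / (E + 1)" "p' \<le> E / (E + 1)"
    using assms(2,3) by auto
  have compl: "1 - E / (E + 1) = 1 / (E + 1)" and "0 < 1 / (E + 1)"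
    using assms(1) by (auto simp: field_simps)
  then have unit: "0 \<le> p" "p \<le> 1" "0 \<le> p'" "p' \<le> 1"
    using lo hi by linarith+
  have odds: "E / (E + 1) = E * (1 / (E + 1))"
    by simp
  have "p \<le> E * p'"
    using hi(1) mult_left_mono[OF lo(2) assms(1)] unfolding odds by linarith
  moreover have "1 - p \<le> E * (1 - p')"
    using lo(1) hi(2) mult_left_mono[of "1 / (E + 1)" "1 - p'" E] assms(1) compl
    unfolding odds by linarith
  ultimately show ?thesis
    using unit by (cases b) auto
qed

lemma pmf_Pi_pmf_le_power_cmult:
  assumes "finite I" "0 \<le> c" "\<And>i x. i \<in> I \<Longrightarrow> pmf (p i) x \<le> c * pmf (q i) x"
  shows "pmf (Pi_pmf I d p) f \<le> c ^ card I * pmf (Pi_pmf I d q) f"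
proof -
  have "(\<Prod>i\<in>I. pmf (p i) (f i)) \<le> (\<Prod>i\<in>I. c * pmf (q i) (f i))"
    using assms(3) by (intro prod_mono) auto
  then show ?thesis
    using assms(1) by (auto simp: pmf_Pi prod.distrib)
qed

lemma emeasure_pmf_le_cmult:
  assumes "0 \<le> c" "\<And>x. pmf p x \<le> c * pmf q x"
  shows "emeasure (measure_pmf p) A \<le> ennreal c * emeasure (measure_pmf q) A"
proof -
  have "emeasure (measure_pmf p) A = (\<integral>\<^sup>+x. ennreal (pmf p x) * indicator A x \<partial>count_space UNIV)"
    by (simp add: nn_integral_measure_pmf[symmetric])
  also have "\<dots> \<le> (\<integral>\<^sup>+x. ennreal c * (ennreal (pmf q x) * indicator A x) \<partial>count_space UNIV)"
    using assms
    by (intro nn_integral_mono) (auto simp: ennreal_mult'[symmetric] indicator_def intro!: ennreal_leI)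
  also have "\<dots> = ennreal c * emeasure (measure_pmf q) A"
    by (simp add: nn_integral_cmult nn_integral_measure_pmf[symmetric])
  finally show ?thesis .
qed

lemma emeasure_bind_pmf_le_cmult:
  assumes "\<And>x. x \<in> set_pmf m \<Longrightarrow>
      emeasure (measure_pmf (F x)) A \<le> ennreal c * emeasure (measure_pmf (G x)) A"
  shows "emeasure (measure_pmf (bind_pmf m F)) A
    \<le> ennreal c * emeasure (measure_pmf (bind_pmf m G)) A"
proof -
  have "(\<integral>\<^sup>+x. emeasure (F x) A \<partial>m) \<le> (\<integral>\<^sup>+x. ennreal c * emeasure (G x) A \<partial>m)"
    using assms by (intro nn_integral_mono_AE) (simp add: AE_measure_pmf_iff)
  then show ?thesis
    by (simp add: nn_integral_cmult)
qed

lemma measure_bind_le_cmult: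
  fixes F :: "'a \<Rightarrow> 'b measure"
  assumes "prob_space mu" "prob_space mu'" "sets mu = sets M" "sets mu' = sets M"
    and "\<And>x. prob_space (F x)" "\<And>x. sets (F x) = sets N"
    and "\<And>A. A \<in> sets N \<Longrightarrow> (\<lambda>x. emeasure (F x) A) \<in> borel_measurable M"
    and "G \<in> sets N" "0 \<le> c"
    and ratio: "\<And>x y. emeasure (F x) G \<le> ennreal c * emeasure (F y) G"
  shows "measure (mu \<bind> F) G \<le> c * measure (mu' \<bind> F) G"
proof -
  interpret mu: prob_space mu by fact
  interpret mu': prob_space mu' by fact
  have "F \<in> measurable M (subprob_algebra N)"
    using assms(5-7) by (intro measurable_subprob_algebra prob_space_imp_subprob_space)
  then have kernel: "F \<in> measurable mu (subprob_algebra N)" "F \<in> measurable mu' (subprob_algebra N)"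
    unfolding measurable_cong_sets[OF assms(3) refl] measurable_cong_sets[OF assms(4) refl] by auto
  have measurable_G: "(\<lambda>x. emeasure (F x) G) \<in> borel_measurable mu'"
    unfolding measurable_cong_sets[OF assms(4) refl] using assms(7,8) .
  have "(\<integral>\<^sup>+x. emeasure (F x) G \<partial>mu) \<le> ennreal c * emeasure (F y) G" for y
  proof -
    have "(\<integral>\<^sup>+x. emeasure (F x) G \<partial>mu) \<le> (\<integral>\<^sup>+x. ennreal c * emeasure (F y) G \<partial>mu)"
      using ratio by (intro nn_integral_mono)
    then show ?thesis
      by (simp add: mu.emeasure_space_1)
  qed
  then have "(\<integral>\<^sup>+y. (\<integral>\<^sup>+x. emeasure (F x) G \<partial>mu) \<partial>mu')
      \<le> (\<integral>\<^sup>+y. ennreal c * emeasure (F y) G \<partial>mu')"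
    by (intro nn_integral_mono)
  then have "(\<integral>\<^sup>+x. emeasure (F x) G \<partial>mu) \<le> (\<integral>\<^sup>+y. ennreal c * emeasure (F y) G \<partial>mu')"
    by (simp add: mu'.emeasure_space_1)
  then have le: "emeasure (mu \<bind> F) G \<le> ennreal c * emeasure (mu' \<bind> F) G"
    using kernel assms(8) measurable_G
    by (simp add: emeasure_bind[OF mu.not_empty] emeasure_bind[OF mu'.not_empty] nn_integral_cmult)
  interpret mu_F: subprob_space "mu \<bind> F"
    using kernel(1) by (intro subprob_space_bind) unfold_locales
  interpret mu'_F: subprob_space "mu' \<bind> F"
    using kernel(2) by (intro subprob_space_bind) unfold_locales
  show ?thesis
    using le assms(9)
    by (simp add: mu_F.emeasure_eq_measure mu'_F.emeasure_eq_measure ennreal_mult'[symmetric])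
qed

lemma borel_measurable_pmf_Pi_bernoulli:
  assumes "finite I" and [measurable]: "\<And>i. f i \<in> borel_measurable N"
  shows "(\<lambda>x. pmf (Pi_pmf I d (\<lambda>i. bernoulli_pmf (f i x))) b) \<in> borel_measurable N"
  unfolding pmf_Pi[OF assms(1)] pmf_bernoulli_pmf by measurable

lemma borel_measurable_emeasure_pmf_finite_type:
  fixes p :: "'a \<Rightarrow> 'b::finite pmf"
  assumes [measurable]: "\<And>y. (\<lambda>x. pmf (p x) y) \<in> borel_measurable N"
  shows "(\<lambda>x. emeasure (measure_pmf (p x)) A) \<in> borel_measurable N"
  unfolding emeasure_measure_pmf_finite[OF finite] by measurable

lemma borel_measurable_emeasure_bind_pmf_finite:
  assumes "finite (set_pmf m)"
    and "\<And>y. y \<in> set_pmf m \<Longrightarrow> (\<lambda>x. emeasure (measure_pmf (F x y)) A) \<in> borel_measurable N"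
  shows "(\<lambda>x. emeasure (measure_pmf (bind_pmf m (F x))) A) \<in> borel_measurable N"
  using assms by (simp add: nn_integral_measure_pmf_finite)

lemma plus_prob_mem_odds_interval:
  assumes "0 \<le> eps" "0 < C"
  shows "plus_prob eps n C u \<in> {1 / (exp (eps / n) + 1) .. exp (eps / n) / (exp (eps / n) + 1)}"
proof -
  define E where "E = exp (eps / n)"
  define t where "t = (clip C u + C) / (2 * C)"
  have "1 \<le> E"
    unfolding E_def using assms(1) by simp
  moreover have "0 \<le> t" "t \<le> 1"
    unfolding t_def clip_def using assms(2) by (auto simp: field_simps)
  ultimately have "0 \<le> t * (E - 1)" "t * (E - 1) \<le> E - 1"
    by (simp_all add: mult_left_le_one_le)
  moreover have "plus_prob eps n C u = 1 / (E + 1) + t * ((E - 1) / (E + 1))"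
    unfolding plus_prob_def E_def t_def by simp
  ultimately show ?thesis
    unfolding E_def[symmetric] by (auto simp: field_simps)
qed

lemma borel_measurable_matrix_vector_mult_nth [measurable]:
  "(\<lambda>g. ((M::real^'n::finite^'m::finite) *v g) $ i) \<in> borel_measurable borel"
  unfolding matrix_vector_mult_def by simp

lemma borel_measurable_plus_prob [measurable]:
  assumes [measurable]: "f \<in> borel_measurable N"
  shows "(\<lambda>x. plus_prob eps n C (f x)) \<in> borel_measurable N"
  unfolding plus_prob_def clip_def by measurable

lemma finite_set_pmf_rand_matrix:
  "finite (set_pmf (rand_matrix :: (real^'d::finite^'k::finite) pmf))"
  unfolding rand_matrix_def entry_pmf_def by (auto simp: set_Pi_pmf intro!: finite_PiE_dflt)

definition sign_pmf ::
    "real \<Rightarrow> real \<Rightarrow> real^'d^'k::finite \<Rightarrow> real^'d \<Rightarrow> ('k \<Rightarrow> bool) pmf" where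
  "sign_pmf eps C M g =
     Pi_pmf UNIV False (\<lambda>i. bernoulli_pmf (plus_prob eps CARD('k) C ((M *v g) $ i)))"

lemma PRS_conv_sign_pmf:
  "PRS TYPE('k) eps C g =
     bind_pmf rand_matrix (\<lambda>M. map_pmf (\<lambda>b. transpose M *v (\<chi> i. if b i then C else - C))
       (sign_pmf eps C (M :: real^'d^'k::finite) g))"
  unfolding PRS_def sign_pmf_def map_pmf_def by simp

lemma emeasure_PRS_le:
  assumes "0 \<le> eps" "0 < C"
  shows "emeasure (measure_pmf (PRS TYPE('k::finite) eps C g)) A
     \<le> ennreal (exp eps) * emeasure (measure_pmf (PRS TYPE('k) eps C (g' :: real^'d::finite))) A"
  unfolding PRS_conv_sign_pmf
proof (rule emeasure_bind_pmf_le_cmult)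
  fix M :: "real^'d^'k"
  let ?out = "\<lambda>b. transpose M *v (\<chi> i. if b i then C else - C)"
  let ?E = "exp (eps / CARD('k))"
  have "pmf (sign_pmf eps C M g) b \<le> ?E ^ CARD('k) * pmf (sign_pmf eps C M g') b" for b
    unfolding sign_pmf_def
    by (intro pmf_Pi_pmf_le_power_cmult pmf_bernoulli_le_cmult plus_prob_mem_odds_interval assms) auto
  moreover have "?E ^ CARD('k) = exp eps"
    by (simp add: exp_of_nat_mult[symmetric])
  ultimately show "emeasure (measure_pmf (map_pmf ?out (sign_pmf eps C M g))) A
     \<le> ennreal (exp eps) * emeasure (measure_pmf (map_pmf ?out (sign_pmf eps C M g'))) A"
    unfolding emeasure_map_pmf by (intro emeasure_pmf_le_cmult) auto
qed

lemma borel_measurable_emeasure_PRS: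
  "(\<lambda>g. emeasure (measure_pmf (PRS TYPE('k::finite) eps C g)) A)
     \<in> borel_measurable (borel :: (real^'d::finite) measure)"
  unfolding PRS_conv_sign_pmf
proof (rule borel_measurable_emeasure_bind_pmf_finite[OF finite_set_pmf_rand_matrix])
  fix M :: "real^'d^'k"
  let ?out = "\<lambda>b. transpose M *v (\<chi> i. if b i then C else - C)"
  show "(\<lambda>g. emeasure (measure_pmf (map_pmf ?out (sign_pmf eps C M g))) A) \<in> borel_measurable borel"
    unfolding emeasure_map_pmf sign_pmf_def
    by (intro borel_measurable_emeasure_pmf_finite_type borel_measurable_pmf_Pi_bernoulli) measurable
qed

theorem lemma3:
  fixes eps C :: real
    and \<Psi> :: "'psi set"
    and K :: "nat \<Rightarrow> 'psi \<Rightarrow> (real^'d) list \<Rightarrow> (real^'d) measure"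
  assumes "eps > 0" and "C > 0"
    and "CARD('k::finite) \<le> CARD('d::finite)"
    and "\<And>n psi h. psi \<in> \<Psi> \<Longrightarrow> prob_space (K n psi h)"
    and "\<And>n psi h. psi \<in> \<Psi> \<Longrightarrow> sets (K n psi h) = sets borel"
  shows "\<forall>n \<in> {1..N}. \<forall>psi \<in> \<Psi>. \<forall>psi' \<in> \<Psi>. \<forall>h. length h = n - 1 \<longrightarrow>
           (\<forall>G \<in> sets borel.
              measure (report_law eps C TYPE('k) (K n psi h)) G
                \<le> exp eps * measure (report_law eps C TYPE('k) (K n psi' h)) G)"
proof (intro ballI allI impI)
  fix n psi psi' h G
  assume "psi \<in> \<Psi>" "psi' \<in> \<Psi>" "G \<in> sets (borel :: (real^'d) measure)"
  \<comment> \<open>The PRS ratio bound holds for every pair of gradients.\<close>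
  then show "measure (report_law eps C TYPE('k) (K n psi h)) G
      \<le> exp eps * measure (report_law eps C TYPE('k) (K n psi' h)) G"
    unfolding report_law_def
    using assms(1,2,4,5)
    by (intro measure_bind_le_cmult[where M = borel and N = "count_space UNIV"]
        emeasure_PRS_le borel_measurable_emeasure_PRS prob_space_measure_pmf) auto
qed

end
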